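(* Let $\hat g\colon M_2\to\mathbb{R}$ be a real-valued function on the set $M_2=\{(x_1,x_2)\in(0,\infty)^2 : x_1\geq x_2\}$, and let $W\colon \mathrm{GL}^+(2)\to\mathbb{R}$ be given by $W(F)=\hat g(\lambda_{\max}(F),\lambda_{\min}(F))$, where $\lambda_{\max}(F)\geq\lambda_{\min}(F)$ are the singular values of $F$. Suppose $\hat g\in C^2(\operatorname{int} M_2)\cap C^1(M_2)$, and suppose $W$ is Legendre-Hadamard elliptic at each $F\in\mathrm{GL}^+(2)$ with simple singular values $\lambda_{\max}(F)\neq\lambda_{\min}(F)$. Then $W$ is rank-one convex on $\mathrm{GL}^+(2)$.
   Context: $\mathrm{GL}^+(n)$ denotes the group of real invertible $n\times n$ matrices with positive determinant. $\operatorname{int}M_2=\{(x_1,x_2)\in(0,\infty)^2: x_1>x_2\}$. $\hat g\in C^1(M_2)$ means that $\hat g$ is continuously differentiable on $M_2$ up to the boundary $\{(x,x):x>0\}$ relative to $(0,\infty)^2$, i.e. $\hat g$ is the restriction of a continuously differentiable function on $(0,\infty)^2$. A function $W\colon\mathrm{GL}^+(n)\to\mathbb{R}$ is rank-one convex if for all $F_1,F_2\in\mathrm{GL}^+(n)$ with $\operatorname{rank}(F_2-F_1)=1$ and all $t\in[0,1]$ one has $W((1-t)F_1+tF_2)\leq(1-t)W(F_1)+tW(F_2)$. $W$ is Legendre-Hadamard elliptic at $F$ if $W$ is twice differentiable at $F$ and $D^2W[F].(\xi\otimes\eta,\xi\otimes\eta)\geq0$ for all $\xi,\eta\in\mathbb{R}^n$.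 *)

theory Defs
  imports "HOL-Analysis.Analysis"
begin

type_synonym mat2 = "real^2^2"

definition GLp2 :: "mat2 set" where
  "GLp2 = {F. det F > 0}"

definition sing_vals :: "mat2 \<Rightarrow> real set" where
  "sing_vals F = {s. s \<ge> 0 \<and> (\<exists>v::real^2. v \<noteq> 0 \<and> (transpose F ** F) *v v = (s^2) *\<^sub>R v)}"

definition lam_max :: "mat2 \<Rightarrow> real" where
  "lam_max F = Max (sing_vals F)"

definition lam_min :: "mat2 \<Rightarrow> real" where
  "lam_min F = Min (sing_vals F)"

definition M2 :: "(real \<times> real) set" where
  "M2 = {(x1, x2). x1 > 0 \<and> x2 > 0 \<and> x1 \<ge> x2}"

definition intM2 :: "(real \<times> real) set" where
  "intM2 = {(x1, x2). x1 > 0 \<and> x2 > 0 \<and> x1 > x2}"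

definition pos_quadrant :: "(real \<times> real) set" where
  "pos_quadrant = {(x1, x2). x1 > 0 \<and> x2 > 0}"

definition C1_on :: "('a::real_normed_vector \<Rightarrow> real) \<Rightarrow> 'a set \<Rightarrow> bool" where
  "C1_on f S \<longleftrightarrow> (\<exists>f' :: 'a \<Rightarrow> ('a \<Rightarrow>\<^sub>L real).
      (\<forall>x\<in>S. (f has_derivative blinfun_apply (f' x)) (at x)) \<and> continuous_on S f')"

definition C2_on :: "('a::real_normed_vector \<Rightarrow> real) \<Rightarrow> 'a set \<Rightarrow> bool" where
  "C2_on f S \<longleftrightarrow> (\<exists>(f' :: 'a \<Rightarrow> ('a \<Rightarrow>\<^sub>L real)) (f'' :: 'a \<Rightarrow> ('a \<Rightarrow>\<^sub>L ('a \<Rightarrow>\<^sub>L real))).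
      (\<forall>x\<in>S. (f has_derivative blinfun_apply (f' x)) (at x)) \<and>
      (\<forall>x\<in>S. (f' has_derivative blinfun_apply (f'' x)) (at x)) \<and>
      continuous_on S f'')"

text \<open>g \<in> C^1(M_2): g is the restriction to M_2 of a C^1 function on (0,\<infinity>)^2.\<close>
definition C1_M2 :: "(real \<times> real \<Rightarrow> real) \<Rightarrow> bool" where
  "C1_M2 g \<longleftrightarrow> (\<exists>G. C1_on G pos_quadrant \<and> (\<forall>x\<in>M2. G x = g x))"

definition dyad :: "real^2 \<Rightarrow> real^2 \<Rightarrow> mat2" where
  "dyad \<xi> \<eta> = (\<chi> i j. \<xi>$i * \<eta>$j)"

definition LH_elliptic_at :: "(mat2 \<Rightarrow> real) \<Rightarrow> mat2 \<Rightarrow> bool" where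
  "LH_elliptic_at W F \<longleftrightarrow> (\<exists>(W' :: mat2 \<Rightarrow> (mat2 \<Rightarrow>\<^sub>L real)) (W'' :: mat2 \<Rightarrow>\<^sub>L (mat2 \<Rightarrow>\<^sub>L real)).
      (\<forall>\<^sub>F G in at F. (W has_derivative blinfun_apply (W' G)) (at G)) \<and>
      (W has_derivative blinfun_apply (W' F)) (at F) \<and>
      (W' has_derivative blinfun_apply W'') (at F) \<and>
      (\<forall>\<xi> \<eta>. blinfun_apply (blinfun_apply W'' (dyad \<xi> \<eta>)) (dyad \<xi> \<eta>) \<ge> 0))"

definition rank_one_convex_on :: "(mat2 \<Rightarrow> real) \<Rightarrow> mat2 set \<Rightarrow> bool" where
  "rank_one_convex_on W S \<longleftrightarrow> (\<forall>F1\<in>S. \<forall>F2\<in>S. \<forall>t::real.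
      rank (F2 - F1) = 1 \<and> 0 \<le> t \<and> t \<le> 1 \<longrightarrow>
      W ((1 - t) *\<^sub>R F1 + t *\<^sub>R F2) \<le> (1 - t) * W F1 + t * W F2)"

end

theory Submission
  imports Defs
begin

text \<open>Split \<open>F\<close> into a conformal and an anticonformal part of norms \<open>c\<close> and \<open>a\<close>. The singular
  values of \<open>F\<close> are \<open>(c + a)/2\<close> and \<open>|c - a|/2\<close>, and \<open>4 det F = c\<^sup>2 - a\<^sup>2\<close>; so on GL+(2)
  they coincide exactly where the anticonformal part vanishes, a two-dimensional linear subspace.
  Along a rank-one line \<open>s \<mapsto> A + s H\<close> the second derivative of \<open>W\<close> is
  \<open>D\<^sup>2W[A + s H](H, H) \<ge> 0\<close> wherever \<open>W\<close> is Legendre-Hadamard elliptic, so \<open>W\<close> is convex on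
  every rank-one segment that stays in GL+(2) (automatic, as \<open>det\<close> is affine along rank-one
  lines) and avoids that subspace.  A rank-one \<open>H\<close> has a non-zero anticonformal part; shifting
  the segment by \<open>e E\<close>, where the anticonformal part of \<open>E\<close> is orthogonal to that of \<open>H\<close>, makes
  it avoid the subspace for all but one value of \<open>e\<close>.  Letting \<open>e \<rightarrow> 0\<close> and using the continuity
  of \<open>W\<close> on GL+(2) gives the rank-one convexity inequality.\<close>

section \<open>Singular values of 2x2 matrices\<close>

lemma det_eq_0_iff_nontrivial_kernel:
  fixes A :: "'a::field^'n^'n"
  shows "det A = 0 \<longleftrightarrow> (\<exists>x. x \<noteq> 0 \<and> A *v x = 0)"
  by (metis invertible_det_nz invertible_left_inverse matrix_left_invertible_ker)

lemma eigenvector_iff_det_eq_0: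
  fixes A :: "real^'n^'n"
  shows "(\<exists>v. v \<noteq> 0 \<and> A *v v = \<mu> *\<^sub>R v) \<longleftrightarrow> det (A - mat \<mu>) = 0"
proof -
  have "mat \<mu> *v v = \<mu> *\<^sub>R v" for v :: "real^'n"
    by (auto simp: vec_eq_iff matrix_vector_mult_def mat_def if_distrib[of "\<lambda>x. x * _"] cong: if_cong)
  then show ?thesis
    unfolding det_eq_0_iff_nontrivial_kernel by (simp add: matrix_vector_mult_diff_rdistrib)
qed

text \<open>\<open>conf_part F = (c\<^sub>1, c\<^sub>2)\<close> and \<open>aconf_part F = (a\<^sub>1, a\<^sub>2)\<close> are the coordinates of the
  splitting \<open>2 F = [[c\<^sub>1, c\<^sub>2], [-c\<^sub>2, c\<^sub>1]] + [[a\<^sub>1, a\<^sub>2], [a\<^sub>2, -a\<^sub>1]]\<close> of \<open>F\<close> into a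
  conformal and an anticonformal matrix.\<close>

definition conf_part :: "mat2 \<Rightarrow> real \<times> real" where
  "conf_part F = (F$1$1 + F$2$2, F$1$2 - F$2$1)"

definition aconf_part :: "mat2 \<Rightarrow> real \<times> real" where
  "aconf_part F = (F$1$1 - F$2$2, F$1$2 + F$2$1)"

lemma linear_aconf_part: "linear aconf_part"
  by (rule linearI) (simp_all add: aconf_part_def algebra_simps)

lemma power2_norm_Pair_real: "(norm (x::real, y::real))\<^sup>2 = x\<^sup>2 + y\<^sup>2"
  unfolding power2_norm_eq_inner by (simp add: power2_eq_square)

lemma norm_conf_part_sq_sub_norm_aconf_part_sq:
  "(norm (conf_part F))\<^sup>2 - (norm (aconf_part F))\<^sup>2 = 4 * det F"
  unfolding conf_part_def aconf_part_def power2_norm_Pair_real det_2 by algebra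

lemma conf_part_aconf_part_eq_0_iff: "conf_part F = 0 \<and> aconf_part F = 0 \<longleftrightarrow> F = 0"
  by (auto simp: conf_part_def aconf_part_def zero_prod_def vec_eq_iff forall_2)

lemma sing_vals_eq:
  "sing_vals F = {(norm (conf_part F) + norm (aconf_part F)) / 2,
                  \<bar>norm (conf_part F) - norm (aconf_part F)\<bar> / 2}"
proof -
  define c a where "c = norm (conf_part F)" and "a = norm (aconf_part F)"
  have c2: "c\<^sup>2 = (F$1$1 + F$2$2)\<^sup>2 + (F$1$2 - F$2$1)\<^sup>2"
    and a2: "a\<^sup>2 = (F$1$1 - F$2$2)\<^sup>2 + (F$1$2 + F$2$1)\<^sup>2"
    unfolding c_def a_def conf_part_def aconf_part_def power2_norm_Pair_real by simp_all
  have char_poly: "det (transpose F ** F - mat \<mu>) = (\<mu> - ((c + a) / 2)\<^sup>2) * (\<mu> - (\<bar>c - a\<bar> / 2)\<^sup>2)" for \<mu>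
  proof -
    have "(\<mu> - ((c + a) / 2)\<^sup>2) * (\<mu> - (\<bar>c - a\<bar> / 2)\<^sup>2) = \<mu>\<^sup>2 - \<mu> * (c\<^sup>2 + a\<^sup>2) / 2 + (c\<^sup>2 - a\<^sup>2)\<^sup>2 / 16"
      by (simp add: power2_eq_square field_simps)
    then show ?thesis
      unfolding c2 a2 det_2
      by (simp add: matrix_matrix_mult_def transpose_def mat_def sum_2 power2_eq_square field_simps)
  qed
  have "s \<in> sing_vals F \<longleftrightarrow> s \<ge> 0 \<and> (s\<^sup>2 = ((c + a) / 2)\<^sup>2 \<or> s\<^sup>2 = (\<bar>c - a\<bar> / 2)\<^sup>2)" for s
    unfolding sing_vals_def eigenvector_iff_det_eq_0 char_poly by auto
  also have "\<dots> s \<longleftrightarrow> s = (c + a) / 2 \<or> s = \<bar>c - a\<bar> / 2" for s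
  proof -
    have "(c + a) / 2 \<ge> 0" "\<bar>c - a\<bar> / 2 \<ge> 0" unfolding c_def a_def by simp_all
    then show ?thesis by (metis power2_eq_iff_nonneg)
  qed
  finally show ?thesis unfolding c_def a_def by blast
qed

lemma lam_max_eq: "lam_max F = (norm (conf_part F) + norm (aconf_part F)) / 2"
  and lam_min_eq: "lam_min F = \<bar>norm (conf_part F) - norm (aconf_part F)\<bar> / 2"
proof -
  have "\<bar>c - a\<bar> / 2 \<le> (c + a) / 2" if "0 \<le> c" "0 \<le> a" for c a :: real
    using that by (simp add: abs_le_iff)
  then have "\<bar>norm (conf_part F) - norm (aconf_part F)\<bar> / 2 \<le> (norm (conf_part F) + norm (aconf_part F)) / 2"
    by simp
  then show "lam_max F = (norm (conf_part F) + norm (aconf_part F)) / 2"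
    and "lam_min F = \<bar>norm (conf_part F) - norm (aconf_part F)\<bar> / 2"
    unfolding lam_max_def lam_min_def sing_vals_eq by (simp_all add: max_absorb1 min_absorb2)
qed

lemma lam_max_eq_lam_min_iff: "lam_max F = lam_min F \<longleftrightarrow> conf_part F = 0 \<or> aconf_part F = 0"
proof -
  have "(c + a) / 2 = \<bar>c - a\<bar> / 2 \<longleftrightarrow> c = 0 \<or> a = 0" if "c \<ge> 0" "a \<ge> 0" for c a :: real
    using that by (auto simp: abs_if)
  then show ?thesis unfolding lam_max_eq lam_min_eq by simp
qed

lemma lam_max_neq_lam_min_if_aconf_part_neq_0:
  assumes "F \<in> GLp2" "aconf_part F \<noteq> 0"
  shows "lam_max F \<noteq> lam_min F"
proof -
  have "(norm (conf_part F))\<^sup>2 > 0"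
    using norm_conf_part_sq_sub_norm_aconf_part_sq[of F] zero_le_power2[of "norm (aconf_part F)"] assms(1)
    unfolding GLp2_def mem_Collect_eq by linarith
  then have "conf_part F \<noteq> 0" by auto
  with assms(2) show ?thesis unfolding lam_max_eq_lam_min_iff by simp
qed

lemma lam_pair_in_M2:
  assumes "F \<in> GLp2"
  shows "(lam_max F, lam_min F) \<in> M2"
proof -
  have "norm (aconf_part F) < norm (conf_part F)"
    using norm_conf_part_sq_sub_norm_aconf_part_sq[of F] assms unfolding GLp2_def
    by (simp add: power2_less_imp_less)
  then show ?thesis
    using norm_ge_zero[of "aconf_part F"] unfolding M2_def lam_max_eq lam_min_eq by (auto simp del: norm_ge_zero)
qed

section \<open>Continuity of functions of the singular values\<close>

lemma continuous_on_lam_pair: "continuous_on S (\<lambda>F. (lam_max F, lam_min F))"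
  unfolding lam_max_eq lam_min_eq conf_part_def aconf_part_def by (intro continuous_intros) simp_all

lemma open_GLp2: "open GLp2"
  unfolding GLp2_def det_2 by (intro open_Collect_less continuous_intros)

lemma C1_on_imp_continuous_on: "C1_on f S \<Longrightarrow> continuous_on S f"
  unfolding C1_on_def by (meson continuous_at_imp_continuous_on has_derivative_continuous)

lemma continuous_on_GLp2_if_C1_M2:
  assumes W_def: "\<And>F. F \<in> GLp2 \<Longrightarrow> W F = g (lam_max F, lam_min F)"
    and "C1_M2 g"
  shows "continuous_on GLp2 W"
proof -
  obtain G where G: "C1_on G pos_quadrant" and Gg: "\<And>x. x \<in> M2 \<Longrightarrow> G x = g x"
    using \<open>C1_M2 g\<close> unfolding C1_M2_def by blast
  have "(\<lambda>F. (lam_max F, lam_min F)) ` GLp2 \<subseteq> pos_quadrant"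
    using lam_pair_in_M2 unfolding M2_def pos_quadrant_def by fastforce
  then have "continuous_on GLp2 (G \<circ> (\<lambda>F. (lam_max F, lam_min F)))"
    by (intro continuous_on_compose continuous_on_lam_pair continuous_on_subset[OF C1_on_imp_continuous_on[OF G]])
  then show ?thesis
    by (rule continuous_on_cong[THEN iffD1, rotated 2]) (simp_all add: W_def Gg lam_pair_in_M2)
qed

lemma eventually_at_0_line_in_GLp2:
  assumes "F \<in> GLp2"
  shows "\<forall>\<^sub>F e in at 0. F + e *\<^sub>R E \<in> GLp2"
proof -
  have "((\<lambda>e. F + e *\<^sub>R E) \<longlongrightarrow> F) (at 0)"
    by (auto intro!: tendsto_eq_intros)
  then show ?thesis using open_GLp2 assms by (rule topological_tendstoD)
qed

lemma tendsto_at_0_along_line_GLp2: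
  assumes "continuous_on GLp2 W" and "F \<in> GLp2"
  shows "((\<lambda>e. W (F + e *\<^sub>R E)) \<longlongrightarrow> W F) (at 0)"
proof -
  have "isCont W F"
    using assms continuous_on_eq_continuous_at[OF open_GLp2] by blast
  moreover have "((\<lambda>e. F + e *\<^sub>R E) \<longlongrightarrow> F) (at 0)"
    by (auto intro!: tendsto_eq_intros)
  ultimately show ?thesis by (rule isCont_tendsto_compose)
qed

section \<open>Rank-one lines\<close>

lemma rank_eq_1_imp_det_eq_0: "rank (H::mat2) = 1 \<Longrightarrow> det H = 0"
  by (simp add: det_eq_0_rank)

lemma det_eq_0_imp_dyad:
  fixes H :: mat2
  assumes "det H = 0"
  shows "\<exists>\<xi> \<eta>. H = dyad \<xi> \<eta>"
proof -
  obtain v where "v \<noteq> 0" and Hv: "H *v v = 0"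
    using assms det_eq_0_iff_nontrivial_kernel by blast
  define n where "n = (v$1)\<^sup>2 + (v$2)\<^sup>2"
  have "n \<noteq> 0"
    using \<open>v \<noteq> 0\<close> unfolding n_def by (metis exhaust_2 sum_power2_eq_zero_iff vec_eq_iff zero_index)
  have row: "H$i$1 * v$1 + H$i$2 * v$2 = 0" for i
    using arg_cong[OF Hv, of "\<lambda>x. x$i"] by (simp add: matrix_vector_mult_def sum_2)
  define w :: "real^2" where "w = vector [- v$2, v$1]"
  \<comment> \<open>\<open>v\<close> and \<open>w\<close> are orthogonal of equal length and \<open>H v = 0\<close>, so \<open>n H = H (v v\<^sup>T + w w\<^sup>T) = (H w) w\<^sup>T\<close>.\<close>
  have "H = dyad ((1 / n) *\<^sub>R (H *v w)) w"
  proof -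
    have "H$i$j * n - (H$i$1 * w$1 + H$i$2 * w$2) * w$j = v$j * (H$i$1 * v$1 + H$i$2 * v$2)" for i j
      using exhaust_2[of j] unfolding n_def w_def by (auto simp: power2_eq_square algebra_simps)
    then have "H$i$j * n = (H$i$1 * w$1 + H$i$2 * w$2) * w$j" for i j
      using row by simp
    then show ?thesis
      using \<open>n \<noteq> 0\<close> by (simp add: dyad_def vec_eq_iff matrix_vector_mult_def sum_2 field_simps)
  qed
  then show ?thesis by blast
qed

lemma det_add_scaleR_if_det_eq_0:
  fixes A H :: mat2
  assumes "det H = 0"
  shows "det (A + s *\<^sub>R H) = (1 - s) * det A + s * det (A + H)"
  using assms unfolding det_2 by (simp add: algebra_simps)

lemma segment_in_GLp2_if_det_eq_0:
  assumes "A \<in> GLp2" "A + H \<in> GLp2" "det H = 0" "s \<in> {0..1}"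
  shows "A + s *\<^sub>R H \<in> GLp2"
proof -
  have "0 < (1 - s) * det A + s * det (A + H)"
  proof (cases "s = 1")
    case False
    with assms show ?thesis unfolding GLp2_def by (auto intro!: add_pos_nonneg)
  qed (use assms in \<open>simp add: GLp2_def\<close>)
  then show ?thesis
    using det_add_scaleR_if_det_eq_0[OF \<open>det H = 0\<close>] by (simp add: GLp2_def)
qed

lemma aconf_part_neq_0_if_det_eq_0:
  assumes "det H = 0" "H \<noteq> 0"
  shows "aconf_part H \<noteq> 0"
  using norm_conf_part_sq_sub_norm_aconf_part_sq[of H] conf_part_aconf_part_eq_0_iff[of H] assms
  by auto

lemma aconf_part_surj: "\<exists>E. aconf_part E = v"
proof
  show "aconf_part (vector [vector [fst v, snd v], vector [0, 0]]) = v"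
    by (simp add: aconf_part_def)
qed

lemma aconf_part_neq_0_off_exceptional:
  assumes "aconf_part H \<bullet> aconf_part E = 0" "aconf_part E \<noteq> 0"
    and "e \<noteq> - (aconf_part F \<bullet> aconf_part E) / (aconf_part E \<bullet> aconf_part E)"
  shows "aconf_part (F + e *\<^sub>R E + s *\<^sub>R H) \<noteq> 0"
proof
  assume "aconf_part (F + e *\<^sub>R E + s *\<^sub>R H) = 0"
  then have "(aconf_part F + e *\<^sub>R aconf_part E + s *\<^sub>R aconf_part H) \<bullet> aconf_part E = 0"
    by (simp add: linear_add[OF linear_aconf_part] linear_scale[OF linear_aconf_part])
  then have "aconf_part F \<bullet> aconf_part E + e * (aconf_part E \<bullet> aconf_part E) = 0"
    using assms(1) by (simp add: inner_add_left)
  then show False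
    using assms(2,3) by (simp add: field_simps)
qed

section \<open>Convexity along rank-one lines\<close>

lemma has_real_derivative_along_line:
  assumes "(f has_derivative f') (at (A + s *\<^sub>R H))"
  shows "((\<lambda>r. f (A + r *\<^sub>R H)) has_real_derivative f' H) (at s)"
proof -
  have "((\<lambda>r. A + r *\<^sub>R H) has_derivative (\<lambda>r. r *\<^sub>R H)) (at s)"
    by (auto intro!: derivative_eq_intros)
  from has_derivative_compose[OF this assms]
  have "((\<lambda>r. f (A + r *\<^sub>R H)) has_derivative (\<lambda>r. f' (r *\<^sub>R H))) (at s)" .
  moreover have "f' (r *\<^sub>R H) = f' H * r" for r
    using linear_scale[OF has_derivative_linear[OF assms]] by simp
  ultimately show ?thesis
    by (simp add: has_field_derivative_def mult_commute_abs)
qed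

lemma has_real_derivative_directional_derivative_along_line:
  fixes f :: "'a::real_normed_vector \<Rightarrow> real"
  assumes deriv: "\<forall>\<^sub>F y in nhds (A + s *\<^sub>R H). (f has_derivative blinfun_apply (f' y)) (at y)"
    and deriv2: "(f' has_derivative blinfun_apply f'') (at (A + s *\<^sub>R H))"
  shows "((\<lambda>r. frechet_derivative f (at (A + r *\<^sub>R H)) H) has_real_derivative f'' H H) (at s)"
proof -
  have "((\<lambda>r. A + r *\<^sub>R H) has_derivative (\<lambda>r. r *\<^sub>R H)) (at s)"
    by (auto intro!: derivative_eq_intros)
  from has_derivative_compose[OF this deriv2]
  have "((\<lambda>r. f' (A + r *\<^sub>R H) H) has_derivative (\<lambda>r. f'' (r *\<^sub>R H) H)) (at s)"
    by (auto intro!: derivative_eq_intros simp: comp_def)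
  then have D2: "((\<lambda>r. f' (A + r *\<^sub>R H) H) has_real_derivative f'' H H) (at s)"
    by (simp add: has_field_derivative_def blinfun.scaleR_left blinfun.scaleR_right mult_commute_abs)
  have ev: "\<forall>\<^sub>F r in nhds s. frechet_derivative f (at (A + r *\<^sub>R H)) H = f' (A + r *\<^sub>R H) H"
  proof -
    have "((\<lambda>r. A + r *\<^sub>R H) \<longlongrightarrow> A + s *\<^sub>R H) (nhds s)"
      by (intro tendsto_intros filterlim_ident)
    from eventually_compose_filterlim[OF deriv this] show ?thesis
      by eventually_elim (metis frechet_derivative_at)
  qed
  show ?thesis
    using DERIV_cong_ev[OF refl ev refl] D2 by simp
qed

lemma LH_elliptic_at_derivatives_along_dyad:
  assumes "LH_elliptic_at W (A + s *\<^sub>R dyad \<xi> \<eta>)"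
  defines "H \<equiv> dyad \<xi> \<eta>"
  shows "((\<lambda>r. W (A + r *\<^sub>R H)) has_real_derivative frechet_derivative W (at (A + s *\<^sub>R H)) H) (at s)"
    and "\<exists>d \<ge> 0. ((\<lambda>r. frechet_derivative W (at (A + r *\<^sub>R H)) H) has_real_derivative d) (at s)"
proof -
  obtain W' W'' where ev: "\<forall>\<^sub>F G in at (A + s *\<^sub>R H). (W has_derivative blinfun_apply (W' G)) (at G)"
    and D: "(W has_derivative blinfun_apply (W' (A + s *\<^sub>R H))) (at (A + s *\<^sub>R H))"
    and D2: "(W' has_derivative blinfun_apply W'') (at (A + s *\<^sub>R H))"
    and rank_one_nonneg: "W'' H H \<ge> 0"
    using assms unfolding LH_elliptic_at_def by blast
  show "((\<lambda>r. W (A + r *\<^sub>R H)) has_real_derivative frechet_derivative W (at (A + s *\<^sub>R H)) H) (at s)"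
    using has_real_derivative_along_line[OF D] frechet_derivative_at[OF D] by simp
  have "\<forall>\<^sub>F G in nhds (A + s *\<^sub>R H). (W has_derivative blinfun_apply (W' G)) (at G)"
    using ev D unfolding eventually_at_filter by (auto elim: eventually_mono)
  from has_real_derivative_directional_derivative_along_line[OF this D2]
  show "\<exists>d \<ge> 0. ((\<lambda>r. frechet_derivative W (at (A + r *\<^sub>R H)) H) has_real_derivative d) (at s)"
    using rank_one_nonneg by blast
qed

lemma convex_on_rank_one_line_if_LH_elliptic:
  assumes "convex I" and ell: "\<And>s. s \<in> I \<Longrightarrow> LH_elliptic_at W (A + s *\<^sub>R dyad \<xi> \<eta>)"
  shows "convex_on I (\<lambda>s. W (A + s *\<^sub>R dyad \<xi> \<eta>))"
proof -
  define D where "D s = frechet_derivative W (at (A + s *\<^sub>R dyad \<xi> \<eta>)) (dyad \<xi> \<eta>)" for s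
  have "\<forall>s\<in>I. \<exists>d \<ge> 0. (D has_real_derivative d) (at s)"
    using LH_elliptic_at_derivatives_along_dyad(2)[OF ell] unfolding D_def by blast
  then obtain D2 where D2: "\<And>s. s \<in> I \<Longrightarrow> D2 s \<ge> 0 \<and> (D has_real_derivative D2 s) (at s)"
    by metis
  show ?thesis
  proof (rule f''_ge0_imp_convex[of I _ D D2])
    show "((\<lambda>s. W (A + s *\<^sub>R dyad \<xi> \<eta>)) has_real_derivative D s) (at s)" if "s \<in> I" for s
      using LH_elliptic_at_derivatives_along_dyad(1)[OF ell[OF that]] unfolding D_def .
  qed (use \<open>convex I\<close> D2 in auto)
qed

lemma rank_one_segment_ineq_if_simple_sing_vals:
  assumes ell: "\<And>F. F \<in> GLp2 \<Longrightarrow> lam_max F \<noteq> lam_min F \<Longrightarrow> LH_elliptic_at W F"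
    and A: "A \<in> GLp2" "A + H \<in> GLp2" and "rank H = 1"
    and simple: "\<And>s. s \<in> {0..1} \<Longrightarrow> aconf_part (A + s *\<^sub>R H) \<noteq> 0"
    and "t \<in> {0..1}"
  shows "W (A + t *\<^sub>R H) \<le> (1 - t) * W A + t * W (A + H)"
proof -
  have "det H = 0" using \<open>rank H = 1\<close> by (rule rank_eq_1_imp_det_eq_0)
  then obtain \<xi> \<eta> where H: "H = dyad \<xi> \<eta>" using det_eq_0_imp_dyad by blast
  have "LH_elliptic_at W (A + s *\<^sub>R H)" if "s \<in> {0..1}" for s
  proof (rule ell)
    show "A + s *\<^sub>R H \<in> GLp2"
      using A \<open>det H = 0\<close> that by (rule segment_in_GLp2_if_det_eq_0)
    then show "lam_max (A + s *\<^sub>R H) \<noteq> lam_min (A + s *\<^sub>R H)"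
      using simple[OF that] by (rule lam_max_neq_lam_min_if_aconf_part_neq_0)
  qed
  then have "convex_on {0..1} (\<lambda>s. W (A + s *\<^sub>R H))"
    unfolding H by (intro convex_on_rank_one_line_if_LH_elliptic) simp_all
  from convex_onD_Icc[OF this, of t] show ?thesis
    using \<open>t \<in> {0..1}\<close> by simp
qed

lemma eventually_perturbed_rank_one_segment_ineq:
  assumes ell: "\<And>F. F \<in> GLp2 \<Longrightarrow> lam_max F \<noteq> lam_min F \<Longrightarrow> LH_elliptic_at W F"
    and F: "F \<in> GLp2" "F + H \<in> GLp2" and "rank H = 1" and "t \<in> {0..1}"
  shows "\<exists>E. \<forall>\<^sub>F e in at 0.
    W (F + t *\<^sub>R H + e *\<^sub>R E) \<le> (1 - t) * W (F + e *\<^sub>R E) + t * W (F + H + e *\<^sub>R E)"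
proof -
  have "aconf_part H \<noteq> 0"
    using rank_eq_1_imp_det_eq_0[OF \<open>rank H = 1\<close>] rank_eq_0[of H] \<open>rank H = 1\<close>
    by (intro aconf_part_neq_0_if_det_eq_0) auto
  obtain E where E: "aconf_part E = (- snd (aconf_part H), fst (aconf_part H))"
    using aconf_part_surj by blast
  have "aconf_part H \<bullet> aconf_part E = 0" "aconf_part E \<noteq> 0"
    using E \<open>aconf_part H \<noteq> 0\<close> by (auto simp: inner_prod_def prod_eq_iff)
  note simple = aconf_part_neq_0_off_exceptional[OF this]
  define e\<^sub>0 where "e\<^sub>0 = - (aconf_part F \<bullet> aconf_part E) / (aconf_part E \<bullet> aconf_part E)"
  have "\<forall>\<^sub>F e in at 0. W (F + t *\<^sub>R H + e *\<^sub>R E) \<le> (1 - t) * W (F + e *\<^sub>R E) + t * W (F + H + e *\<^sub>R E)"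
    using eventually_neq_at_within[of e\<^sub>0 0] eventually_at_0_line_in_GLp2[OF F(1), of E]
      eventually_at_0_line_in_GLp2[OF F(2), of E]
  proof eventually_elim
    case (elim e)
    have "W (F + e *\<^sub>R E + t *\<^sub>R H) \<le> (1 - t) * W (F + e *\<^sub>R E) + t * W (F + e *\<^sub>R E + H)"
    proof (rule rank_one_segment_ineq_if_simple_sing_vals[OF ell])
      show "F + e *\<^sub>R E + H \<in> GLp2"
        using elim(3) by (simp add: algebra_simps)
      show "aconf_part (F + e *\<^sub>R E + s *\<^sub>R H) \<noteq> 0" for s
        using simple elim(1) unfolding e\<^sub>0_def by blast
    qed (use elim(2) \<open>rank H = 1\<close> \<open>t \<in> {0..1}\<close> in auto)
    then show ?case by (simp add: algebra_simps)
  qed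
  then show ?thesis by blast
qed

theorem theorem3p2:
  fixes g :: "real \<times> real \<Rightarrow> real" and W :: "mat2 \<Rightarrow> real"
  assumes W_def: "\<And>F. F \<in> GLp2 \<Longrightarrow> W F = g (lam_max F, lam_min F)"
    and g_C2: "C2_on g intM2"
    and g_C1: "C1_M2 g"
    and ell: "\<And>F. F \<in> GLp2 \<Longrightarrow> lam_max F \<noteq> lam_min F \<Longrightarrow> LH_elliptic_at W F"
  shows "rank_one_convex_on W GLp2"
  unfolding rank_one_convex_on_def
proof (intro ballI allI impI)
  fix F1 F2 :: mat2 and t :: real
  assume F1: "F1 \<in> GLp2" and F2: "F2 \<in> GLp2" and "rank (F2 - F1) = 1 \<and> 0 \<le> t \<and> t \<le> 1"
  then have rank: "rank (F2 - F1) = 1" and t: "t \<in> {0..1}" by auto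
  have F2': "F1 + (F2 - F1) \<in> GLp2" using F2 by simp
  obtain E where ev: "\<forall>\<^sub>F e in at 0. W (F1 + t *\<^sub>R (F2 - F1) + e *\<^sub>R E)
      \<le> (1 - t) * W (F1 + e *\<^sub>R E) + t * W (F1 + (F2 - F1) + e *\<^sub>R E)"
    using eventually_perturbed_rank_one_segment_ineq[OF ell F1 F2' rank t] by blast
  have cont: "continuous_on GLp2 W"
    using W_def g_C1 by (rule continuous_on_GLp2_if_C1_M2)
  have "F1 + t *\<^sub>R (F2 - F1) \<in> GLp2"
    using F1 F2' rank_eq_1_imp_det_eq_0[OF rank] t by (rule segment_in_GLp2_if_det_eq_0)
  then have "W (F1 + t *\<^sub>R (F2 - F1)) \<le> (1 - t) * W F1 + t * W (F1 + (F2 - F1))"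
    by (intro tendsto_le[OF trivial_limit_at _ _ ev] tendsto_intros tendsto_at_0_along_line_GLp2 cont F1 F2')
  then show "W ((1 - t) *\<^sub>R F1 + t *\<^sub>R F2) \<le> (1 - t) * W F1 + t * W F2"
    by (simp add: algebra_simps)
qed

end
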